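(* For all $y,k\in\mathbb N_0$: \begin{enumerate} \item $y+2k+\{3,4,6,7\}+4\cdot[0,k]\in\mathcal L(C_2^5)$; \item $y+2k+\{4,5,6,8,9\}+4\cdot[0,k]\in\mathcal L(C_2^5)$. \end{enumerate}
   Context: $C_2^r$ denotes an elementary abelian $2$-group of rank $r$; $[a,b]=\{x\in\mathbb Z:a\le x\le b\}$. For $L,L'\subset\mathbb Z$ and $y,k\in\mathbb Z$: $L+L'=\{a+b:a\in L,b\in L'\}$, $y+L=\{y\}+L$, and $k\cdot L=\{ka:a\in L\}$ (so $4\cdot[0,k]=\{0,4,\dots,4k\}$). For a subset $G_0$ of a finite abelian group $G$, a sequence over $G_0$ is an element of the free abelian monoid $\mathcal F(G_0)$ with basis $G_0$ (a finite unordered list of elements of $G_0$, repetitions allowed). $\mathcal B(G_0)$ is the monoid of zero-sum sequences over $G_0$ (including the empty sequence). An atom is a minimal zero-sum sequence, i.e. a nonempty zero-sum sequence that is not a product of two nonempty zero-sum sequences. For $B\in\mathcal B(G_0)$, $\mathsf L(B)=\{k\in\mathbb N_0: B \text{ is a product of } k \text{ atoms}\}$, and $\mathcal L(G_0)=\{\mathsf L(B):B\in\mathcal B(G_0)\}$; $\mathcal L(G)$ is the case $G_0=G$. *)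

theory Defs
  imports "HOL-Library.Z2" "HOL-Library.Multiset" "HOL-Analysis.Finite_Cartesian_Product"
begin

text \<open>Sequences over G0 are finite multisets with support in G0.
  The elementary abelian 2-group of rank 5 is the vector type bit^5 (bit = Z/2Z).\<close>

definition zero_sum :: "'a::comm_monoid_add multiset \<Rightarrow> bool" where
  "zero_sum S \<longleftrightarrow> sum_mset S = 0"

definition seqs_over :: "'a set \<Rightarrow> 'a multiset set" where
  "seqs_over G0 = {S. set_mset S \<subseteq> G0}"

definition zss :: "'a::comm_monoid_add set \<Rightarrow> 'a multiset set" where
  "zss G0 = {S. S \<in> seqs_over G0 \<and> zero_sum S}"

definition atom :: "'a::comm_monoid_add multiset \<Rightarrow> bool" where
  "atom S \<longleftrightarrow> S \<noteq> {#} \<and> zero_sum S \<and>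
     \<not> (\<exists>U V. U \<noteq> {#} \<and> V \<noteq> {#} \<and> zero_sum U \<and> zero_sum V \<and> S = U + V)"

definition lengths :: "'a::comm_monoid_add multiset \<Rightarrow> nat set" where
  "lengths B = {k. \<exists>As. length As = k \<and> (\<forall>A\<in>set As. atom A) \<and> B = sum_list As}"

definition system_of_sets :: "'a::comm_monoid_add set \<Rightarrow> nat set set" where
  "system_of_sets G0 = {lengths B | B. B \<in> zss G0}"

end

theory Submission
  imports Defs
begin

text \<open>
  Write \<open>E1, \<dots>, E5\<close> for the standard basis of \<open>C\<^sub>2\<^sup>5\<close>, \<open>E0 = E1 + \<dots> + E5\<close>,
  \<open>Eij = Ei + Ej\<close> and \<open>U = E0 E1 \<dots> E5\<close>. The two length sets are those of
  \<open>B1 = 0\<^sup>y U\<^bsup>2k+2\<^esup> E12\<^sup>2\<close> and \<open>B2 = 0\<^sup>y U\<^bsup>2k+3\<^esup> E1 E2 E13 E23\<close>.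
  In a group of exponent 2, an atom supported on \<open>{0} \<union> L\<close> (with \<open>L\<close> a set of nonzero
  elements) is \<open>0\<close>, a square \<open>x\<^sup>2\<close> with \<open>x \<in> L\<close>, or a minimal zero-sum subset of \<open>L\<close>;
  for the small supports of \<open>B1\<close> and \<open>B2\<close> the latter are found coordinatewise.
  A factorization is then given by the multiplicities of these finitely many atoms, which
  satisfy one linear equation for each element of the support. Solving the system, the number
  of atoms is \<open>y + 2k + a + 4i\<close>, where \<open>i\<close> is essentially the multiplicity of \<open>E0\<^sup>2\<close>
  and the small offset \<open>a\<close> depends on which atoms through \<open>E12\<close> (resp. \<open>E13, E23\<close>) occur.
\<close>

section \<open>Atoms of zero-sum sequences\<close>

lemma zero_sum_diff:
  fixes A S :: "'a::comm_monoid_add multiset"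
  assumes "S \<subseteq># A" "zero_sum A" "zero_sum S"
  shows "zero_sum (A - S)"
proof -
  have "sum_mset A = sum_mset S + sum_mset (A - S)"
    using assms(1) sum_mset.union[of S "A - S"] by simp
  then show ?thesis using assms(2,3) by (simp add: zero_sum_def)
qed

lemma atom_iff_minimal:
  "atom A \<longleftrightarrow> A \<noteq> {#} \<and> zero_sum A \<and> (\<forall>S. S \<subseteq># A \<longrightarrow> S \<noteq> {#} \<longrightarrow> zero_sum S \<longrightarrow> S = A)"
proof
  assume A: "atom A"
  have "S = A" if S: "S \<subseteq># A" "S \<noteq> {#}" "zero_sum S" for S
  proof (rule ccontr)
    assume "S \<noteq> A"
    have split: "A = S + (A - S)" using S(1) by simp
    then have "A - S \<noteq> {#}" using \<open>S \<noteq> A\<close> by auto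
    moreover have "zero_sum (A - S)" using zero_sum_diff[OF S(1) _ S(3)] A unfolding atom_def by blast
    ultimately show False using A S(2,3) split unfolding atom_def by blast
  qed
  then show "A \<noteq> {#} \<and> zero_sum A \<and> (\<forall>S. S \<subseteq># A \<longrightarrow> S \<noteq> {#} \<longrightarrow> zero_sum S \<longrightarrow> S = A)"
    using A by (simp add: atom_def)
next
  assume min: "A \<noteq> {#} \<and> zero_sum A \<and> (\<forall>S. S \<subseteq># A \<longrightarrow> S \<noteq> {#} \<longrightarrow> zero_sum S \<longrightarrow> S = A)"
  have "V = {#}" if "U \<noteq> {#}" "zero_sum U" "A = U + V" for U V
  proof -
    have "U \<subseteq># A" using that(3) by simp
    then have "U = A" using min that(1,2) by blast
    then show ?thesis using that(3) by simp
  qed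
  then show "atom A" using min unfolding atom_def by blast
qed

lemma atom_minimal:
  assumes "atom A" "S \<subseteq># A" "S \<noteq> {#}" "zero_sum S"
  shows "S = A"
  using assms unfolding atom_iff_minimal by blast

lemma atom_single_zero: "atom {#0::'a::comm_monoid_add#}"
  unfolding atom_iff_minimal zero_sum_def
proof (intro conjI allI impI)
  fix S :: "'a multiset" assume "S \<subseteq># {#0#}" "S \<noteq> {#}"
  then show "S = {#0#}" by (cases S) auto
qed simp_all

lemma atom_pair:
  fixes x :: "'a::comm_monoid_add"
  assumes "x \<noteq> 0" "x + x = 0"
  shows "atom {#x, x#}"
  unfolding atom_iff_minimal
proof (intro conjI allI impI)
  fix S assume S: "S \<subseteq># {#x, x#}" "S \<noteq> {#}" "zero_sum S"
  then obtain a M where a: "S = add_mset a M" by (cases S) auto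
  then have "a = x" using S(1) mset_subset_eqD[of S "{#x, x#}" a] by auto
  then have "M \<subseteq># {#x#}" using S(1) a by simp
  then have "M = {#} \<or> M = {#x#}" by (cases M) auto
  then show "S = {#x, x#}" using S(3) a \<open>a = x\<close> assms(1) by (auto simp: zero_sum_def)
qed (use assms in \<open>simp_all add: zero_sum_def\<close>)

lemma atom_eq_single_zero:
  assumes "atom A" "0 \<in># A"
  shows "A = {#0#}"
  by (rule atom_minimal[OF assms(1), symmetric]) (use assms(2) in \<open>simp_all add: zero_sum_def\<close>)

lemma atom_eq_pair:
  fixes x :: "'a::comm_monoid_add"
  assumes "atom A" "2 \<le> count A x" "x + x = 0"
  shows "A = {#x, x#}"
proof (rule atom_minimal[OF assms(1), symmetric])
  show "{#x, x#} \<subseteq># A" using assms(2) by (simp add: subseteq_mset_def)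
qed (use assms(3) in \<open>simp_all add: zero_sum_def\<close>)

lemma atom_cases:
  fixes A :: "'a::comm_monoid_add multiset"
  assumes "atom A" "\<And>x::'a. x + x = 0" "distinct L" "set_mset A \<subseteq> insert 0 (set L)"
  shows "A = {#0#} \<or> (\<exists>x\<in>set L. A = {#x, x#}) \<or> A \<subseteq># mset L"
proof -
  consider "0 \<in># A" | x where "0 \<notin># A" "2 \<le> count A x" | "0 \<notin># A" "\<forall>x. count A x < 2"
    by (meson not_le)
  then show ?thesis
  proof cases
    case 1
    then show ?thesis using atom_eq_single_zero assms(1) by blast
  next
    case (2 x)
    then have "x \<in># A" by (metis count_eq_zero_iff not_numeral_le_zero)
    then show ?thesis using atom_eq_pair[OF assms(1) 2(2) assms(2)] 2(1) assms(4) by auto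
  next
    case 3
    have "count A x \<le> count (mset L) x" for x
    proof (cases "x \<in># A")
      case True
      then have "x \<in> set L" using 3(1) assms(4) by auto
      then have "count (mset L) x = 1" using assms(3) by (simp add: distinct_count_atmost_1)
      moreover have "count A x < 2" using 3(2) by blast
      ultimately show ?thesis by linarith
    qed (simp add: not_in_iff)
    then show ?thesis by (simp add: subseteq_mset_def)
  qed
qed

section \<open>Factorizations as coefficient vectors\<close>

lemma multiset_eq_iff_on:
  assumes "set_mset M \<subseteq> S" "set_mset N \<subseteq> S"
  shows "M = N \<longleftrightarrow> (\<forall>x\<in>S. count M x = count N x)"
  using assms by (auto simp: multiset_eq_iff) (metis count_eq_zero_iff subsetD)

lemma subset_mset_distinct_eq_filter:
  assumes "distinct L" "V \<subseteq># mset L"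
  shows "V = mset (filter (\<lambda>x. x \<in># V) L)"
proof (rule multiset_eqI)
  fix x
  show "count V x = count (mset (filter (\<lambda>x. x \<in># V) L)) x"
  proof (cases "x \<in># V")
    case True
    have "count V x \<le> count (mset L) x" using assms(2) by (simp add: subseteq_mset_def)
    moreover have "count (mset L) x \<le> 1" using assms(1) by (simp add: distinct_count_atmost_1)
    moreover have "1 \<le> count V x" using True by (simp add: Suc_le_eq)
    ultimately have "count V x = count (mset L) x" by linarith
    then show ?thesis using True by simp
  qed (simp add: count_eq_zero_iff)
qed

definition mset_comb :: "'a multiset list \<Rightarrow> (nat \<Rightarrow> nat) \<Rightarrow> 'a multiset" where
  "mset_comb Ts c = (\<Sum>i<length Ts. repeat_mset (c i) (Ts ! i))"

lemma count_mset_comb: "count (mset_comb Ts c) x = (\<Sum>i<length Ts. c i * count (Ts ! i) x)"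
  by (simp add: mset_comb_def count_sum)

lemma set_mset_mset_comb: "set_mset (mset_comb Ts c) \<subseteq> (\<Union>T\<in>set Ts. set_mset T)"
proof
  fix x assume "x \<in># mset_comb Ts c"
  then obtain i where "i < length Ts" "x \<in># repeat_mset (c i) (Ts ! i)"
    by (auto simp: mset_comb_def set_mset_sum)
  then have "x \<in># Ts ! i" by (metis count_eq_zero_iff count_repeat_mset mult_0_right)
  then show "x \<in> (\<Union>T\<in>set Ts. set_mset T)" using \<open>i < length Ts\<close> by auto
qed

lemma sum_list_eq_mset_comb_count_list:
  assumes "distinct Ts" "set As \<subseteq> set Ts"
  shows "sum_list As = mset_comb Ts (\<lambda>i. count_list As (Ts ! i))"
  using assms(2)
proof (induction As)
  case (Cons A As)
  obtain j where j: "j < length Ts" "A = Ts ! j" using Cons.prems by (auto simp: in_set_conv_nth)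
  have "mset_comb Ts (\<lambda>i. count_list (A # As) (Ts ! i))
      = (\<Sum>i<length Ts. repeat_mset (count_list As (Ts ! i)) (Ts ! i) + (if i = j then Ts ! i else {#}))"
    unfolding mset_comb_def j(2)
    by (intro sum.cong) (simp_all add: nth_eq_iff_index_eq[OF assms(1) j(1)] repeat_mset_distrib)
  also have "\<dots> = A + mset_comb Ts (\<lambda>i. count_list As (Ts ! i))"
    using j by (simp add: mset_comb_def sum.distrib)
  finally show ?case using Cons by simp
qed (simp add: mset_comb_def)

lemma length_eq_sum_count_list:
  assumes "distinct Ts" "set As \<subseteq> set Ts"
  shows "length As = (\<Sum>i<length Ts. count_list As (Ts ! i))"
  using assms(2)
proof (induction As)
  case (Cons A As)
  obtain j where j: "j < length Ts" "A = Ts ! j" using Cons.prems by (auto simp: in_set_conv_nth)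
  have "(\<Sum>i<length Ts. count_list (A # As) (Ts ! i))
      = (\<Sum>i<length Ts. count_list As (Ts ! i) + (if i = j then 1 else 0))"
    unfolding j(2) by (intro sum.cong) (simp_all add: nth_eq_iff_index_eq[OF assms(1) j(1)])
  then show ?case using Cons j(1) by (simp add: sum.distrib)
qed simp

lemma sum_list_replicate_mset: "sum_list (replicate n A) = repeat_mset n (A :: 'a multiset)"
  by (induction n) auto

lemma lengths_eq_coefficient_sums:
  assumes "distinct Ts" "\<forall>T\<in>set Ts. atom T" "\<And>A. atom A \<Longrightarrow> A \<subseteq># B \<Longrightarrow> A \<in> set Ts"
  shows "lengths B = {\<Sum>i<length Ts. c i | c. B = mset_comb Ts c}"
proof (intro set_eqI iffI)
  fix n assume "n \<in> lengths B"
  then obtain As where As: "length As = n" "\<forall>A\<in>set As. atom A" "B = sum_list As"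
    unfolding lengths_def by blast
  have "A \<in> set Ts" if "A \<in> set As" for A
  proof (rule assms(3))
    show "A \<subseteq># B" using sum_list_map_remove1[OF that, of "\<lambda>x. x"] As(3) by simp
  qed (use that As(2) in blast)
  then have "set As \<subseteq> set Ts" by blast
  then show "n \<in> {\<Sum>i<length Ts. c i | c. B = mset_comb Ts c}"
    using sum_list_eq_mset_comb_count_list length_eq_sum_count_list assms(1) As by blast
next
  fix n assume "n \<in> {\<Sum>i<length Ts. c i | c. B = mset_comb Ts c}"
  then obtain c where c: "n = (\<Sum>i<length Ts. c i)" "B = mset_comb Ts c" by blast
  define As where "As = concat (map (\<lambda>i. replicate (c i) (Ts ! i)) [0..<length Ts])"
  have "sum_list (concat xss) = sum_list (map sum_list xss)" for xss :: "'a multiset list list"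
    by (induction xss) auto
  then have "sum_list As = B"
    by (simp add: As_def c(2) mset_comb_def comp_def sum_list_replicate_mset atLeast0LessThan
        flip: sum_set_upt_conv_sum_list_nat)
  moreover have "length As = n"
    by (simp add: As_def c(1) length_concat comp_def atLeast0LessThan
        flip: sum_set_upt_conv_sum_list_nat)
  moreover have "\<forall>A\<in>set As. atom A" using assms(2) by (auto simp: As_def)
  ultimately show "n \<in> lengths B" unfolding lengths_def by blast
qed

definition atom_list :: "'a::zero list \<Rightarrow> 'a multiset list \<Rightarrow> 'a multiset list" where
  "atom_list L Z = {#0#} # map (\<lambda>x. {#x, x#}) L @ Z"

lemma set_atom_list:
  fixes L :: "'a::comm_monoid_add list"
  assumes "\<And>x::'a. x + x = 0" "0 \<notin> set L" "distinct L" "set Z = {T. atom T \<and> T \<subseteq># mset L}"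
  shows "set (atom_list L Z) = {A. atom A \<and> set_mset A \<subseteq> insert 0 (set L)}"
proof (intro set_eqI iffI)
  fix A assume "A \<in> set (atom_list L Z)"
  then consider "A = {#0#}" | x where "x \<in> set L" "A = {#x, x#}" | "A \<in> set Z"
    unfolding atom_list_def by auto
  then show "A \<in> {A. atom A \<and> set_mset A \<subseteq> insert 0 (set L)}"
  proof cases
    case (2 x)
    then have "x \<noteq> 0" using assms(2) by blast
    then have "atom A" using atom_pair[OF _ assms(1)] 2(2) by blast
    then show ?thesis using 2 by simp
  next
    case 3
    then have "atom A" "A \<subseteq># mset L" using assms(4) by blast+
    then show ?thesis using set_mset_mono[of A "mset L"] by auto
  qed (simp add: atom_single_zero)
next
  fix A assume "A \<in> {A. atom A \<and> set_mset A \<subseteq> insert 0 (set L)}"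
  then have A: "atom A" "set_mset A \<subseteq> insert 0 (set L)" by auto
  have "A = {#0#} \<or> (\<exists>x\<in>set L. A = {#x, x#}) \<or> A \<in> set Z"
    using atom_cases[OF A(1) assms(1,3) A(2)] A(1) assms(4) by blast
  then show "A \<in> set (atom_list L Z)" unfolding atom_list_def by auto
qed

lemma distinct_atom_list:
  fixes L :: "'a::zero list"
  assumes "0 \<notin> set L" "distinct L" "distinct Z" "\<forall>T\<in>set Z. T \<subseteq># mset L"
  shows "distinct (atom_list L Z)"
proof -
  have "{#x, x#} \<notin> set Z" if "x \<in> set L" for x
  proof
    assume "{#x, x#} \<in> set Z"
    then have "{#x, x#} \<subseteq># mset L" using assms(4) by blast
    then have "count {#x, x#} x \<le> count (mset L) x" by (rule mset_subset_eq_count)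
    moreover have "count (mset L) x = 1" using that assms(2) by (simp add: distinct_count_atmost_1)
    moreover have "count {#x, x#} x = 2" by simp
    ultimately show False by linarith
  qed
  moreover have "{#0#} \<notin> set Z"
  proof
    assume "{#0#} \<in> set Z"
    then have "{#0#} \<subseteq># mset L" using assms(4) by blast
    then show False using assms(1) by simp
  qed
  moreover have "inj_on (\<lambda>x. {#x, x#}) (set L)"
  proof (rule inj_onI)
    fix x y :: 'a assume "{#x, x#} = {#y, y#}"
    then have "x \<in># {#y, y#}" by (rule union_single_eq_member)
    then show "x = y" by simp
  qed
  moreover have "{#0#} \<noteq> {#x, x#}" for x :: 'a
    using arg_cong[where f = size, of "{#0#}" "{#x, x#}"] by auto
  ultimately show ?thesis using assms(2,3) unfolding atom_list_def by (auto simp: distinct_map)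
qed

lemma lengths_eq_coefficient_sums_atom_list:
  fixes L :: "'a::comm_monoid_add list"
  assumes "\<And>x::'a. x + x = 0" "0 \<notin> set L" "distinct L" "distinct Z"
    "set Z = {T. atom T \<and> T \<subseteq># mset L}" "set_mset B \<subseteq> insert 0 (set L)"
  shows "lengths B = {\<Sum>i<length (atom_list L Z). c i | c. B = mset_comb (atom_list L Z) c}"
proof (rule lengths_eq_coefficient_sums)
  show "distinct (atom_list L Z)" using distinct_atom_list assms(2-5) by blast
  show "\<forall>T\<in>set (atom_list L Z). atom T" using set_atom_list[OF assms(1,2,3,5)] by blast
  show "A \<in> set (atom_list L Z)" if "atom A" "A \<subseteq># B" for A
  proof -
    have "set_mset A \<subseteq> insert 0 (set L)" using set_mset_mono[OF that(2)] assms(6) by blast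
    then show ?thesis using that(1) set_atom_list[OF assms(1,2,3,5)] by blast
  qed
qed

lemma lengths_mem_system_of_sets:
  assumes "zero_sum B" "set_mset B \<subseteq> G0"
  shows "lengths B \<in> system_of_sets G0"
  using assms unfolding system_of_sets_def zss_def seqs_over_def by blast

lemma exhaust_5:
  fixes x :: 5
  shows "x = 0 \<or> x = 1 \<or> x = 2 \<or> x = 3 \<or> x = 4"
proof (induct x)
  case (of_int z)
  then have "z = 0 \<or> z = 1 \<or> z = 2 \<or> z = 3 \<or> z = 4" by fastforce
  then show ?case by auto
qed

lemma forall_5: "(\<forall>i::5. P i) \<longleftrightarrow> P 0 \<and> P 1 \<and> P 2 \<and> P 3 \<and> P 4"
  by (metis exhaust_5)

lemma bit_vec_double: "(x :: bit ^ 'n) + x = 0"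
  by (simp add: vec_eq_iff)

lemma bit_indicator_eq:
  "(if p then (1::bit) else 0) = 1 \<longleftrightarrow> p" "(if p then (1::bit) else 0) = 0 \<longleftrightarrow> \<not> p"
  by simp_all

lemma sum_list_filter_component:
  "sum_list (filter P xs) $ i = sum_list (map (\<lambda>x. if P x then x $ i else 0) xs)"
  by (induction xs) auto

definition E0 :: "bit^5" where "E0 = (\<chi> i. 1)"
definition E1 :: "bit^5" where "E1 = axis 0 1"
definition E2 :: "bit^5" where "E2 = axis 1 1"
definition E3 :: "bit^5" where "E3 = axis 2 1"
definition E4 :: "bit^5" where "E4 = axis 3 1"
definition E5 :: "bit^5" where "E5 = axis 4 1"
definition E12 :: "bit^5" where "E12 = E1 + E2"
definition E13 :: "bit^5" where "E13 = E1 + E3"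
definition E23 :: "bit^5" where "E23 = E2 + E3"

lemmas basis_defs = E0_def E1_def E2_def E3_def E4_def E5_def E12_def E13_def E23_def

lemma basis_components:
  "E0 $ i = 1" "E1 $ i = (if i = 0 then 1 else 0)" "E2 $ i = (if i = 1 then 1 else 0)"
  "E3 $ i = (if i = 2 then 1 else 0)" "E4 $ i = (if i = 3 then 1 else 0)"
  "E5 $ i = (if i = 4 then 1 else 0)"
  by (simp_all add: basis_defs axis_def)

lemma basis_distinct: "distinct [E0, E1, E2, E3, E4, E5, E12, E13, E23]"
  by (simp add: vec_eq_iff forall_5 basis_defs axis_def)

lemma basis_nonzero: "0 \<notin> set [E0, E1, E2, E3, E4, E5, E12, E13, E23]"
  by (simp add: vec_eq_iff forall_5 basis_defs axis_def)

text \<open>Pairwise distinctness in both orientations, as needed by the simplifier.\<close>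

lemmas basis_neq =
  basis_nonzero[simplified] basis_distinct[simplified] iffD2[OF distinct_rev basis_distinct, simplified]

section \<open>The first family\<close>

lemma progression_memI:
  fixes n y k a i :: nat
  shows "n = y + 2 * k + a + 4 * i \<Longrightarrow> a \<in> A \<Longrightarrow> i \<le> k \<Longrightarrow>
    n \<in> {y + 2 * k + a + 4 * i | a i. a \<in> A \<and> i \<le> k}"
  by blast

lemma progression_memI_shift:
  fixes n y k a p :: nat
  assumes "n = y + 2 * k + a + 4 * p" "p \<le> k + 1" "a \<in> A" "a + 4 \<in> A"
  shows "n \<in> {y + 2 * k + a + 4 * i | a i. a \<in> A \<and> i \<le> k}"
proof (cases "p \<le> k")
  case False
  then have "n = y + 2 * k + (a + 4) + 4 * k" using assms(1,2) by simp
  then show ?thesis using assms(4) by (rule progression_memI) simp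
qed (use assms in \<open>blast intro: progression_memI\<close>)

definition support1 :: "(bit ^ 5) list" where
  "support1 = [E0, E1, E2, E3, E4, E5, E12]"

definition squarefree_atoms1 :: "(bit ^ 5) multiset list" where
  "squarefree_atoms1 = [{#E0, E1, E2, E3, E4, E5#}, {#E1, E2, E12#}, {#E0, E3, E4, E5, E12#}]"

lemma zero_sum_submsets_support1:
  assumes "V \<subseteq># mset support1" "V \<noteq> {#}" "zero_sum V"
  shows "V \<in> set squarefree_atoms1"
proof -
  define P where "P x \<longleftrightarrow> x \<in># V" for x
  have V: "V = mset (filter P support1)"
    unfolding P_def
    by (rule subset_mset_distinct_eq_filter) (use assms(1) basis_neq in \<open>auto simp: support1_def\<close>)
  have sum0: "sum_list (filter P support1) = 0"
    using assms(3) unfolding zero_sum_def V sum_mset_sum_list .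
  have c: "sum_list (map (\<lambda>x. if P x then x $ i else 0) support1) = 0" for i
    using arg_cong[where f = "\<lambda>v. v $ i", OF sum0] by (simp only: sum_list_filter_component zero_index)
  have "P E3 = P E0" "P E4 = P E0" "P E5 = P E0" "P E1 = (P E0 \<noteq> P E12)" "P E2 = (P E0 \<noteq> P E12)"
    using c[of 2] c[of 3] c[of 4] c[of 0] c[of 1]
    by (auto simp: support1_def basis_components E12_def bit_indicator_eq cong: if_cong)
  then show ?thesis using V assms(2)
    by (cases "P E0"; cases "P E12") (simp_all add: support1_def squarefree_atoms1_def)
qed

lemma set_squarefree_atoms1: "set squarefree_atoms1 = {T. atom T \<and> T \<subseteq># mset support1}"
proof (intro set_eqI iffI)
  fix T assume T: "T \<in> set squarefree_atoms1"
  have sub: "T \<subseteq># mset support1"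
    using T basis_neq by (auto simp: squarefree_atoms1_def support1_def)
  have "atom T" unfolding atom_iff_minimal
  proof (intro conjI allI impI)
    show "T \<noteq> {#}" using T by (auto simp: squarefree_atoms1_def)
    show "zero_sum T"
      using T by (auto simp: squarefree_atoms1_def zero_sum_def vec_eq_iff forall_5 basis_defs axis_def)
    fix S assume S: "S \<subseteq># T" "S \<noteq> {#}" "zero_sum S"
    then have "S \<in> set squarefree_atoms1"
      using zero_sum_submsets_support1 sub subset_mset.order_trans by blast
    then show "S = T" using S(1) T basis_neq
      by (auto simp: squarefree_atoms1_def dest!: set_mset_mono)
  qed
  then show "T \<in> {T. atom T \<and> T \<subseteq># mset support1}" using sub by blast
next
  fix T assume "T \<in> {T. atom T \<and> T \<subseteq># mset support1}"
  then show "T \<in> set squarefree_atoms1"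
    using zero_sum_submsets_support1 by (auto simp: atom_iff_minimal)
qed

definition B1 :: "nat \<Rightarrow> nat \<Rightarrow> (bit ^ 5) multiset" where
  "B1 y k = replicate_mset y 0 + repeat_mset (2 * k + 2) {#E0, E1, E2, E3, E4, E5#} + {#E12, E12#}"

lemma zero_sum_B1: "zero_sum (B1 y k)"
  by (simp add: B1_def zero_sum_def bit_vec_double vec_eq_iff forall_5 basis_defs axis_def)

text \<open>
  \<open>c i\<close> is the multiplicity of the \<open>i\<close>-th atom of \<open>atom_list support1 squarefree_atoms1\<close>;
  the equations compare the multiplicities of \<open>0, E0, \<dots>, E5, E12\<close> in \<open>B1\<close> and in the
  factorization.
\<close>

definition factorization_eqs1 :: "nat \<Rightarrow> nat \<Rightarrow> (nat \<Rightarrow> nat) \<Rightarrow> bool" where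
  "factorization_eqs1 y k c \<longleftrightarrow> y = c 0 \<and>
     2 * k + 2 = 2 * c 1 + c 8 + c 10 \<and> 2 * k + 2 = 2 * c 2 + c 8 + c 9 \<and>
     2 * k + 2 = 2 * c 3 + c 8 + c 9 \<and> 2 * k + 2 = 2 * c 4 + c 8 + c 10 \<and>
     2 * k + 2 = 2 * c 5 + c 8 + c 10 \<and> 2 * k + 2 = 2 * c 6 + c 8 + c 10 \<and>
     2 = 2 * c 7 + c 9 + c 10"

lemma B1_eq_mset_comb_iff:
  "B1 y k = mset_comb (atom_list support1 squarefree_atoms1) c \<longleftrightarrow> factorization_eqs1 y k c"
proof -
  let ?S = "set (0 # support1)"
  have "set_mset (B1 y k) \<subseteq> ?S" by (auto simp: B1_def support1_def)
  moreover have "set_mset (mset_comb (atom_list support1 squarefree_atoms1) c) \<subseteq> ?S"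
    using set_mset_mset_comb[of "atom_list support1 squarefree_atoms1" c]
    by (auto simp: atom_list_def squarefree_atoms1_def support1_def)
  ultimately have "B1 y k = mset_comb (atom_list support1 squarefree_atoms1) c \<longleftrightarrow>
      (\<forall>x\<in>?S. count (B1 y k) x = count (mset_comb (atom_list support1 squarefree_atoms1) c) x)"
    by (rule multiset_eq_iff_on)
  also have "\<dots> \<longleftrightarrow> factorization_eqs1 y k c"
    by (simp add: count_mset_comb support1_def B1_def atom_list_def squarefree_atoms1_def
        factorization_eqs1_def eval_nat_numeral basis_neq)
  finally show ?thesis .
qed

lemma factorization_eqs1_sum_mem:
  assumes "factorization_eqs1 y k c"
  shows "(\<Sum>i<11. c i) \<in> {y + 2 * k + a + 4 * i | a i. a \<in> {3, 4, 6, 7} \<and> i \<le> k}"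
proof -
  have eqs: "y = c 0" "2 * k + 2 = 2 * c 1 + c 8 + c 10" "2 * k + 2 = 2 * c 2 + c 8 + c 9"
    "2 * k + 2 = 2 * c 3 + c 8 + c 9" "2 * k + 2 = 2 * c 4 + c 8 + c 10"
    "2 * k + 2 = 2 * c 5 + c 8 + c 10" "2 * k + 2 = 2 * c 6 + c 8 + c 10" "2 = 2 * c 7 + c 9 + c 10"
    using assms unfolding factorization_eqs1_def by blast+
  define t where "t = c 7 + c 10"
  have "(\<Sum>i<11. c i) = c 0 + c 1 + c 2 + c 3 + c 4 + c 5 + c 6 + c 7 + c 8 + c 9 + c 10"
    by (simp add: eval_nat_numeral)
  also have "\<dots> = y + 2 * k + 2 + t + 4 * c 1" using eqs unfolding t_def by linarith
  finally have sum: "(\<Sum>i<11. c i) = y + 2 * k + 2 + t + 4 * c 1" .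
  have bound: "2 * c 1 + c 10 \<le> 2 * k + 2" using eqs(2) by linarith
  consider "t = 0" "c 9 = 2" "c 10 = 0" | "t = 1" | "t = 2" "c 10 = 2"
    using eqs(8) unfolding t_def by linarith
  then show ?thesis
  proof cases
    case 1
    then have "1 \<le> c 1" "c 1 - 1 \<le> k" using eqs(2,3) bound by linarith+
    then show ?thesis using sum 1 by (intro progression_memI[where a = 6 and i = "c 1 - 1"]) simp_all
  next
    case 2
    then show ?thesis using sum bound by (intro progression_memI_shift[where a = 3 and p = "c 1"]) simp_all
  next
    case 3
    then show ?thesis using sum bound by (intro progression_memI[where a = 4 and i = "c 1"]) simp_all
  qed
qed

lemma factorization_eqs1_solvable:
  assumes "n \<in> {y + 2 * k + a + 4 * i | a i. a \<in> {3, 4, 6, 7} \<and> i \<le> k}"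
  shows "\<exists>c. factorization_eqs1 y k c \<and> n = (\<Sum>i<11. c i)"
proof -
  obtain a i where ai: "a \<in> {3, 4, 6, 7}" "i \<le> k" "n = y + 2 * k + a + 4 * i" using assms by blast
  then consider "a = 3" | "a = 4" | "a = 6" | "a = 7" by blast
  then show ?thesis
  proof cases
    case 1
    show ?thesis by (rule exI[of _ "(!) [y, i, i, i, i, i, i, 1, 2 * k + 2 - 2 * i, 0, 0]"])
        (use ai 1 in \<open>simp add: factorization_eqs1_def eval_nat_numeral\<close>)
  next
    case 2
    show ?thesis by (rule exI[of _ "(!) [y, i, i + 1, i + 1, i, i, i, 0, 2 * k - 2 * i, 0, 2]"])
        (use ai 2 in \<open>simp add: factorization_eqs1_def eval_nat_numeral\<close>)
  next
    case 3
    show ?thesis by (rule exI[of _ "(!) [y, i + 1, i, i, i + 1, i + 1, i + 1, 0, 2 * k - 2 * i, 2, 0]"])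
        (use ai 3 in \<open>simp add: factorization_eqs1_def eval_nat_numeral\<close>)
  next
    case 4
    show ?thesis by (rule exI[of _ "(!) [y, i + 1, i + 1, i + 1, i + 1, i + 1, i + 1, 1, 2 * k - 2 * i, 0, 0]"])
        (use ai 4 in \<open>simp add: factorization_eqs1_def eval_nat_numeral\<close>)
  qed
qed

lemma lengths_B1: "lengths (B1 y k) = {y + 2 * k + a + 4 * i | a i. a \<in> {3, 4, 6, 7} \<and> i \<le> k}"
proof -
  have "lengths (B1 y k) = {\<Sum>i<length (atom_list support1 squarefree_atoms1). c i | c.
      B1 y k = mset_comb (atom_list support1 squarefree_atoms1) c}"
  proof (rule lengths_eq_coefficient_sums_atom_list)
    show "x + x = 0" for x :: "bit ^ 5" by (rule bit_vec_double)
    show "0 \<notin> set support1" "distinct support1" by (simp_all add: support1_def basis_neq)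
    have "distinct (map (\<lambda>M. (count M E0, count M E1, count M E2, count M E3)) squarefree_atoms1)"
      by (simp add: squarefree_atoms1_def basis_neq)
    then show "distinct squarefree_atoms1" by (simp add: distinct_map)
    show "set_mset (B1 y k) \<subseteq> insert 0 (set support1)" by (auto simp: B1_def support1_def)
  qed (rule set_squarefree_atoms1)
  also have "\<dots> = {\<Sum>i<11. c i | c. factorization_eqs1 y k c}"
  proof -
    have "length (atom_list support1 squarefree_atoms1) = 11"
      by (simp add: atom_list_def support1_def squarefree_atoms1_def)
    then show ?thesis unfolding B1_eq_mset_comb_iff by simp
  qed
  also have "\<dots> = {y + 2 * k + a + 4 * i | a i. a \<in> {3, 4, 6, 7} \<and> i \<le> k}"
    using factorization_eqs1_sum_mem factorization_eqs1_solvable by blast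
  finally show ?thesis .
qed

section \<open>The second family\<close>

definition support2 :: "(bit ^ 5) list" where
  "support2 = [E0, E1, E2, E3, E4, E5, E13, E23]"

definition squarefree_atoms2 :: "(bit ^ 5) multiset list" where
  "squarefree_atoms2 = [{#E0, E1, E2, E3, E4, E5#}, {#E1, E3, E13#}, {#E0, E2, E4, E5, E13#},
     {#E2, E3, E23#}, {#E0, E1, E4, E5, E23#}, {#E1, E2, E13, E23#}, {#E0, E3, E4, E5, E13, E23#}]"

lemma zero_sum_submsets_support2:
  assumes "V \<subseteq># mset support2" "V \<noteq> {#}" "zero_sum V"
  shows "V \<in> set squarefree_atoms2"
proof -
  define P where "P x \<longleftrightarrow> x \<in># V" for x
  have V: "V = mset (filter P support2)"
    unfolding P_def
    by (rule subset_mset_distinct_eq_filter) (use assms(1) basis_neq in \<open>auto simp: support2_def\<close>)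
  have sum0: "sum_list (filter P support2) = 0"
    using assms(3) unfolding zero_sum_def V sum_mset_sum_list .
  have c: "sum_list (map (\<lambda>x. if P x then x $ i else 0) support2) = 0" for i
    using arg_cong[where f = "\<lambda>v. v $ i", OF sum0] by (simp only: sum_list_filter_component zero_index)
  have "P E4 = P E0" "P E5 = P E0" "P E1 = (P E0 \<noteq> P E13)" "P E2 = (P E0 \<noteq> P E23)"
    "P E3 = (P E0 \<noteq> (P E13 \<noteq> P E23))"
    using c[of 3] c[of 4] c[of 0] c[of 1] c[of 2]
    by (auto simp: support2_def basis_components E13_def E23_def bit_indicator_eq cong: if_cong)
  then show ?thesis using V assms(2)
    by (cases "P E0"; cases "P E13"; cases "P E23") (simp_all add: support2_def squarefree_atoms2_def)
qed

lemma set_squarefree_atoms2: "set squarefree_atoms2 = {T. atom T \<and> T \<subseteq># mset support2}"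
proof (intro set_eqI iffI)
  fix T assume T: "T \<in> set squarefree_atoms2"
  have sub: "T \<subseteq># mset support2"
    using T basis_neq by (auto simp: squarefree_atoms2_def support2_def)
  have "atom T" unfolding atom_iff_minimal
  proof (intro conjI allI impI)
    show "T \<noteq> {#}" using T by (auto simp: squarefree_atoms2_def)
    show "zero_sum T"
      using T by (auto simp: squarefree_atoms2_def zero_sum_def vec_eq_iff forall_5 basis_defs axis_def)
    fix S assume S: "S \<subseteq># T" "S \<noteq> {#}" "zero_sum S"
    then have "S \<in> set squarefree_atoms2"
      using zero_sum_submsets_support2 sub subset_mset.order_trans by blast
    then show "S = T" using S(1) T basis_neq
      by (auto simp: squarefree_atoms2_def dest!: set_mset_mono)
  qed
  then show "T \<in> {T. atom T \<and> T \<subseteq># mset support2}" using sub by blast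
next
  fix T assume "T \<in> {T. atom T \<and> T \<subseteq># mset support2}"
  then show "T \<in> set squarefree_atoms2"
    using zero_sum_submsets_support2 by (auto simp: atom_iff_minimal)
qed

definition B2 :: "nat \<Rightarrow> nat \<Rightarrow> (bit ^ 5) multiset" where
  "B2 y k = replicate_mset y 0 + repeat_mset (2 * k + 3) {#E0, E1, E2, E3, E4, E5#} + {#E1, E2, E13, E23#}"

lemma zero_sum_B2: "zero_sum (B2 y k)"
  by (simp add: B2_def zero_sum_def bit_vec_double vec_eq_iff forall_5 basis_defs axis_def)

text \<open>
  As for \<open>factorization_eqs1\<close>, now for \<open>atom_list support2 squarefree_atoms2\<close> and the
  elements \<open>0, E0, \<dots>, E5, E13, E23\<close>.
\<close>

definition factorization_eqs2 :: "nat \<Rightarrow> nat \<Rightarrow> (nat \<Rightarrow> nat) \<Rightarrow> bool" where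
  "factorization_eqs2 y k c \<longleftrightarrow> y = c 0 \<and>
     2 * k + 3 = 2 * c 1 + c 9 + c 11 + c 13 + c 15 \<and>
     2 * k + 4 = 2 * c 2 + c 9 + c 10 + c 13 + c 14 \<and>
     2 * k + 4 = 2 * c 3 + c 9 + c 11 + c 12 + c 14 \<and>
     2 * k + 3 = 2 * c 4 + c 9 + c 10 + c 12 + c 15 \<and>
     2 * k + 3 = 2 * c 5 + c 9 + c 11 + c 13 + c 15 \<and>
     2 * k + 3 = 2 * c 6 + c 9 + c 11 + c 13 + c 15 \<and>
     1 = 2 * c 7 + c 10 + c 11 + c 14 + c 15 \<and>
     1 = 2 * c 8 + c 12 + c 13 + c 14 + c 15"

lemma B2_eq_mset_comb_iff:
  "B2 y k = mset_comb (atom_list support2 squarefree_atoms2) c \<longleftrightarrow> factorization_eqs2 y k c"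
proof -
  let ?S = "set (0 # support2)"
  have "set_mset (B2 y k) \<subseteq> ?S" by (auto simp: B2_def support2_def)
  moreover have "set_mset (mset_comb (atom_list support2 squarefree_atoms2) c) \<subseteq> ?S"
    using set_mset_mset_comb[of "atom_list support2 squarefree_atoms2" c]
    by (auto simp: atom_list_def squarefree_atoms2_def support2_def)
  ultimately have "B2 y k = mset_comb (atom_list support2 squarefree_atoms2) c \<longleftrightarrow>
      (\<forall>x\<in>?S. count (B2 y k) x = count (mset_comb (atom_list support2 squarefree_atoms2) c) x)"
    by (rule multiset_eq_iff_on)
  also have "\<dots> \<longleftrightarrow> factorization_eqs2 y k c"
    by (simp add: count_mset_comb support2_def B2_def atom_list_def squarefree_atoms2_def
        factorization_eqs2_def eval_nat_numeral basis_neq)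
  finally show ?thesis .
qed

lemma factorization_eqs2_sum_mem:
  assumes "factorization_eqs2 y k c"
  shows "(\<Sum>i<16. c i) \<in> {y + 2 * k + a + 4 * i | a i. a \<in> {4, 5, 6, 8, 9} \<and> i \<le> k}"
proof -
  have eqs: "y = c 0" "2 * k + 3 = 2 * c 1 + c 9 + c 11 + c 13 + c 15"
    "2 * k + 4 = 2 * c 2 + c 9 + c 10 + c 13 + c 14" "2 * k + 4 = 2 * c 3 + c 9 + c 11 + c 12 + c 14"
    "2 * k + 3 = 2 * c 4 + c 9 + c 10 + c 12 + c 15" "2 * k + 3 = 2 * c 5 + c 9 + c 11 + c 13 + c 15"
    "2 * k + 3 = 2 * c 6 + c 9 + c 11 + c 13 + c 15" "1 = 2 * c 7 + c 10 + c 11 + c 14 + c 15"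
    "1 = 2 * c 8 + c 12 + c 13 + c 14 + c 15"
    using assms unfolding factorization_eqs2_def by blast+
  have "c 7 = 0" "c 8 = 0" using eqs(8,9) by arith+
  define t where "t = c 11 + c 13 + c 15"
  have "(\<Sum>i<16. c i) = c 0 + c 1 + c 2 + c 3 + c 4 + c 5 + c 6 + c 7 + c 8 + c 9 + c 10 + c 11
      + c 12 + c 13 + c 14 + c 15"
    by (simp add: eval_nat_numeral)
  also have "\<dots> = y + 2 * k + 4 + t + 4 * c 1"
    using eqs \<open>c 7 = 0\<close> \<open>c 8 = 0\<close> unfolding t_def by linarith
  finally have sum: "(\<Sum>i<16. c i) = y + 2 * k + 4 + t + 4 * c 1" .
  have bound: "2 * c 1 + t \<le> 2 * k + 3" using eqs(2) unfolding t_def by linarith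
  consider "t = 0" | "t = 1" | "t = 2"
    using eqs(8,9) unfolding t_def by linarith
  then show ?thesis
  proof cases
    case 1
    then show ?thesis using sum bound by (intro progression_memI_shift[where a = 4 and p = "c 1"]) simp_all
  next
    case 2
    then show ?thesis using sum bound by (intro progression_memI_shift[where a = 5 and p = "c 1"]) simp_all
  next
    case 3
    then show ?thesis using sum bound by (intro progression_memI[where a = 6 and i = "c 1"]) simp_all
  qed
qed

lemma factorization_eqs2_solvable:
  assumes "n \<in> {y + 2 * k + a + 4 * i | a i. a \<in> {4, 5, 6, 8, 9} \<and> i \<le> k}"
  shows "\<exists>c. factorization_eqs2 y k c \<and> n = (\<Sum>i<16. c i)"
proof -
  obtain a i where ai: "a \<in> {4, 5, 6, 8, 9}" "i \<le> k" "n = y + 2 * k + a + 4 * i" using assms by blast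
  then consider "a = 4" | "a = 5" | "a = 6" | "a = 8" | "a = 9" by blast
  then show ?thesis
  proof cases
    case 1
    show ?thesis by (rule exI[of _ "(!) [y, i, i, i, i, i, i, 0, 0, 2 * k + 3 - 2 * i, 0, 0, 0, 0, 1, 0]"])
        (use ai 1 in \<open>simp add: factorization_eqs2_def eval_nat_numeral\<close>)
  next
    case 2
    show ?thesis by (rule exI[of _ "(!) [y, i, i + 1, i + 1, i, i, i, 0, 0, 2 * k + 2 - 2 * i, 0, 0, 0, 0, 0, 1]"])
        (use ai 2 in \<open>simp add: factorization_eqs2_def eval_nat_numeral\<close>)
  next
    case 3
    show ?thesis by (rule exI[of _ "(!) [y, i, i + 1, i + 1, i + 1, i, i, 0, 0, 2 * k + 1 - 2 * i, 0, 1, 0, 1, 0, 0]"])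
        (use ai 3 in \<open>simp add: factorization_eqs2_def eval_nat_numeral\<close>)
  next
    case 4
    show ?thesis by (rule exI[of _ "(!) [y, i + 1, i + 1, i + 1, i + 1, i + 1, i + 1, 0, 0, 2 * k + 1 - 2 * i, 0, 0, 0, 0, 1, 0]"])
        (use ai 4 in \<open>simp add: factorization_eqs2_def eval_nat_numeral\<close>)
  next
    case 5
    show ?thesis by (rule exI[of _ "(!) [y, i + 1, i + 2, i + 2, i + 1, i + 1, i + 1, 0, 0, 2 * k - 2 * i, 0, 0, 0, 0, 0, 1]"])
        (use ai 5 in \<open>simp add: factorization_eqs2_def eval_nat_numeral\<close>)
  qed
qed

lemma lengths_B2: "lengths (B2 y k) = {y + 2 * k + a + 4 * i | a i. a \<in> {4, 5, 6, 8, 9} \<and> i \<le> k}"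
proof -
  have "lengths (B2 y k) = {\<Sum>i<length (atom_list support2 squarefree_atoms2). c i | c.
      B2 y k = mset_comb (atom_list support2 squarefree_atoms2) c}"
  proof (rule lengths_eq_coefficient_sums_atom_list)
    show "x + x = 0" for x :: "bit ^ 5" by (rule bit_vec_double)
    show "0 \<notin> set support2" "distinct support2" by (simp_all add: support2_def basis_neq)
    have "distinct (map (\<lambda>M. (count M E0, count M E1, count M E2, count M E3)) squarefree_atoms2)"
      by (simp add: squarefree_atoms2_def basis_neq)
    then show "distinct squarefree_atoms2" by (simp add: distinct_map)
    show "set_mset (B2 y k) \<subseteq> insert 0 (set support2)" by (auto simp: B2_def support2_def)
  qed (rule set_squarefree_atoms2)
  also have "\<dots> = {\<Sum>i<16. c i | c. factorization_eqs2 y k c}"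
  proof -
    have "length (atom_list support2 squarefree_atoms2) = 16"
      by (simp add: atom_list_def support2_def squarefree_atoms2_def)
    then show ?thesis unfolding B2_eq_mset_comb_iff by simp
  qed
  also have "\<dots> = {y + 2 * k + a + 4 * i | a i. a \<in> {4, 5, 6, 8, 9} \<and> i \<le> k}"
    using factorization_eqs2_sum_mem factorization_eqs2_solvable by blast
  finally show ?thesis .
qed

theorem lemma3p8:
  fixes y k :: nat
  shows "{y + 2*k + a + 4*i | a i. a \<in> {3,4,6,7} \<and> i \<le> k}
           \<in> system_of_sets (UNIV :: (bit ^ 5) set)
       \<and> {y + 2*k + a + 4*i | a i. a \<in> {4,5,6,8,9} \<and> i \<le> k}
           \<in> system_of_sets (UNIV :: (bit ^ 5) set)"
  using lengths_mem_system_of_sets[OF zero_sum_B1[of y k], of UNIV]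
    lengths_mem_system_of_sets[OF zero_sum_B2[of y k], of UNIV]
  unfolding lengths_B1 lengths_B2 by blast

end
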